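(* For any activation pattern (any choice of diagonal $\{0,1\}$-matrices $R^{(\ell)}$ on the activation edges) and identity output activation $\phi = \mathrm{id}$, the restricted coboundary $\delta_\Omega$ is a square matrix with $\det \delta_\Omega = 1$. Consequently the restricted Laplacian satisfies \[ L_{\mathcal{F}_R}[\Omega,\Omega] = \delta_\Omega^T\, \delta_\Omega, \qquad \det L_{\mathcal{F}_R}[\Omega,\Omega] = 1, \] and in particular is positive definite.
   Context: Consider a feedforward ReLU network with $k$ hidden layers, layer widths $n_0,\dots,n_{k+1}$, weight matrices $W^{(\ell)}\in\mathbb{R}^{n_\ell\times n_{\ell-1}}$ and biases $b^{(\ell)}\in\mathbb{R}^{n_\ell}$. Define the extended weight matrix $\overline{W}^{(\ell)} = (W^{(\ell)}\mid \mathrm{diag}(b^{(\ell)}))$ and the extended activation $\overline{a}^{(\ell)} = (a^{(\ell)}, \mathbf{1}_{n_{\ell+1}})$, with $\overline{a}^{(0)}=\overline{\mathbf{x}}=(\mathbf{x},\mathbf{1}_{n_1})$. A cellular sheaf $\mathcal{F}$ is built on the path graph $v_x - v_{z^{(1)}} - v_{a^{(1)}} - v_{z^{(2)}} - \cdots - v_{a^{(k)}} - v_{z^{(k+1)}} - v_y$ (with $v_{a^{(0)}}\equiv v_x$), with stalks $\mathbb{R}^{n_0+n_1}$ at $v_x$, $\mathbb{R}^{n_\ell}$ at $v_{z^{(\ell)}}$, $\mathbb{R}^{n_\ell+n_{\ell+1}}$ at $v_{a^{(\ell)}}$, $\mathbb{R}^{n_{k+1}}$ at $v_y$. Writing $\mathcal{F}_{v,e}$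 for the restriction map from the stalk at vertex $v$ to the stalk at an incident edge $e$: on the weight edge $e_{z^{(\ell)}}$ (from $v_{a^{(\ell-1)}}$ to $v_{z^{(\ell)}}$, edge stalk $\mathbb{R}^{n_\ell}$) the maps are $\overline{W}^{(\ell)}$ and $I_{n_\ell}$; on the activation edge $e_{a^{(\ell)}}$ (from $v_{z^{(\ell)}}$ to $v_{a^{(\ell)}}$, edge stalk $\mathbb{R}^{n_\ell}$) they are a diagonal $0/1$ matrix $R^{(\ell)}$ and the projection $P_{n_\ell}=(I_{n_\ell}\ 0)$; on the output edge $e_y$ (from $v_{z^{(k+1)}}$ to $v_y$) they are $\phi$ and $I_{n_{k+1}}$. The coboundary is $(\delta x)_e = \mathcal{F}_{v,e}x_v - \mathcal{F}_{u,e}x_u$ for $e=u\to v$, and the sheaf Laplacian is $L=\delta^T\delta$. $\mathcal{F}_R$ denotes this sheaf with the activation pattern frozen at $R$. The fixed (boundary) coordinates $u$ are the whole input stalk at $v_x$ and the ones blocks $\mathbf{1}_{n_{\ell+1}}$ inside each $v_{a^{(\ell)}}$ stalk; the remaining free coordinates are $\omega=(z^{(1)},a^{(1)},\dots,a^{(k)},z^{(k+1)},\hat{y})$. Writing $\delta\overline{\omega}=\delta_\Omega\omega+\delta_U u$ for $\overline{\omega}=u\oplus\omega$, $\delta_\Omega$ is the restriction of the coboundary to the free coordinates and $L_{\mathcal{F}_R}[\Omega,\Omega]$ the corresponding block of the Laplacian. *)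

theory Defs
  imports "Jordan_Normal_Form.Determinant" "Jordan_Normal_Form.DL_Submatrix"
begin

text \<open>Path graph with vertices 0,...,m and edges i (i < m) oriented from vertex i to
  vertex i+1.  Vertex j has stalk of dimension dv j, edge i has stalk of dimension de i.
  Fs i is the restriction map from the stalk of the source vertex i to edge i,
  Ft i the restriction map from the stalk of the target vertex i+1 to edge i.
  The global 0-cochain (resp. 1-cochain) space is the concatenation of vertex (resp. edge)
  stalks in path order.\<close>

definition blk :: "real mat \<Rightarrow> nat \<Rightarrow> nat \<Rightarrow> nat \<times> nat \<Rightarrow> real" where
  "blk A r0 c0 rc = (case rc of (r, c) \<Rightarrow>
     if r0 \<le> r \<and> r < r0 + dim_row A \<and> c0 \<le> c \<and> c < c0 + dim_col A
     then A $$ (r - r0, c - c0) else 0)"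

definition path_coboundary ::
  "nat \<Rightarrow> (nat \<Rightarrow> nat) \<Rightarrow> (nat \<Rightarrow> nat) \<Rightarrow> (nat \<Rightarrow> real mat) \<Rightarrow> (nat \<Rightarrow> real mat) \<Rightarrow> real mat" where
  "path_coboundary m dv de Fs Ft =
     mat (\<Sum>i<m. de i) (\<Sum>j<Suc m. dv j)
       (\<lambda>rc. \<Sum>i<m. blk (Ft i) (\<Sum>p<i. de p) (\<Sum>q<Suc i. dv q) rc
                    - blk (Fs i) (\<Sum>p<i. de p) (\<Sum>q<i. dv q) rc)"

definition sheaf_laplacian :: "real mat \<Rightarrow> real mat" where
  "sheaf_laplacian \<delta> = transpose_mat \<delta> * \<delta>"

text \<open>Widths n 0, ..., n (k+1).  Vertices in path order (index j):
  0 = v_x, 2l-1 = v_z(l) (l = 1..k+1), 2l = v_a(l) (l = 1..k), 2k+2 = v_y.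
  Edges (index i, from vertex i to i+1):
  2(l-1) = weight edge e_z(l) (l = 1..k+1), 2l-1 = activation edge e_a(l) (l = 1..k),
  2k+1 = output edge e_y.\<close>

definition nn_vdim :: "nat \<Rightarrow> (nat \<Rightarrow> nat) \<Rightarrow> nat \<Rightarrow> nat" where
  "nn_vdim k n j =
     (if j = 0 then n 0 + n 1
      else if odd j then n ((j + 1) div 2)
      else if j = 2 * k + 2 then n (k + 1)
      else n (j div 2) + n (j div 2 + 1))"

definition nn_edim :: "nat \<Rightarrow> (nat \<Rightarrow> nat) \<Rightarrow> nat \<Rightarrow> nat" where
  "nn_edim k n i =
     (if even i then n (i div 2 + 1)
      else if i = 2 * k + 1 then n (k + 1)
      else n ((i + 1) div 2))"

definition ext_weight :: "real mat \<Rightarrow> real vec \<Rightarrow> real mat" where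
  "ext_weight W b = four_block_mat W (mat_diag (dim_vec b) (\<lambda>i. b $ i))
                      (0\<^sub>m 0 (dim_col W)) (0\<^sub>m 0 (dim_vec b))"

definition proj_mat :: "nat \<Rightarrow> nat \<Rightarrow> real mat" where
  "proj_mat p q = mat p (p + q) (\<lambda>(i, j). if i = j then 1 else 0)"

definition nn_src ::
  "nat \<Rightarrow> (nat \<Rightarrow> real mat) \<Rightarrow> (nat \<Rightarrow> real vec) \<Rightarrow> (nat \<Rightarrow> real mat) \<Rightarrow> real mat \<Rightarrow> nat \<Rightarrow> real mat" where
  "nn_src k W b R \<phi> i =
     (if even i then ext_weight (W (i div 2 + 1)) (b (i div 2 + 1))
      else if i = 2 * k + 1 then \<phi>
      else R ((i + 1) div 2))"

definition nn_tgt :: "nat \<Rightarrow> (nat \<Rightarrow> nat) \<Rightarrow> nat \<Rightarrow> real mat" where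
  "nn_tgt k n i =
     (if even i then 1\<^sub>m (n (i div 2 + 1))
      else if i = 2 * k + 1 then 1\<^sub>m (n (k + 1))
      else proj_mat (n ((i + 1) div 2)) (n ((i + 1) div 2 + 1)))"

definition nn_coboundary ::
  "nat \<Rightarrow> (nat \<Rightarrow> nat) \<Rightarrow> (nat \<Rightarrow> real mat) \<Rightarrow> (nat \<Rightarrow> real vec) \<Rightarrow> (nat \<Rightarrow> real mat) \<Rightarrow> real mat \<Rightarrow> real mat" where
  "nn_coboundary k n W b R \<phi> =
     path_coboundary (2 * k + 2) (nn_vdim k n) (nn_edim k n) (nn_src k W b R \<phi>) (nn_tgt k n)"

definition nn_voff :: "nat \<Rightarrow> (nat \<Rightarrow> nat) \<Rightarrow> nat \<Rightarrow> nat" where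
  "nn_voff k n j = (\<Sum>q<j. nn_vdim k n q)"

text \<open>Fixed (boundary) coordinates u: the whole input stalk at v_x, and the ones-block
  (last n_(l+1) coordinates) of each stalk at v_a(l), l = 1..k.\<close>
definition nn_fixed :: "nat \<Rightarrow> (nat \<Rightarrow> nat) \<Rightarrow> nat set" where
  "nn_fixed k n = {..< nn_vdim k n 0} \<union>
     (\<Union>l\<in>{1..k}. {nn_voff k n (2 * l) + n l ..< nn_voff k n (2 * l) + n l + n (l + 1)})"

text \<open>Free coordinates Omega = (z1, a1, ..., ak, z(k+1), yhat), in path order.\<close>
definition nn_free :: "nat \<Rightarrow> (nat \<Rightarrow> nat) \<Rightarrow> nat set" where
  "nn_free k n = {..< nn_voff k n (2 * k + 3)} - nn_fixed k n"

definition positive_definite_mat :: "real mat \<Rightarrow> bool" where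
  "positive_definite_mat A \<longleftrightarrow>
     A \<in> carrier_mat (dim_row A) (dim_row A) \<and> transpose_mat A = A \<and>
     (\<forall>x \<in> carrier_vec (dim_row A). x \<noteq> 0\<^sub>v (dim_row A) \<longrightarrow> x \<bullet> (A *\<^sub>v x) > 0)"

end

theory Submission
  imports Defs
begin

text \<open>The free part of the stalk at vertex i+1
  consists of its first de(i) coordinates, and on these the target restriction map of edge i is
  the identity (I for weight and output edges, the projection (I 0) for activation edges).
  So row block i of \<delta>_\<Omega> has an identity block in column block i, minus the source map
  of edge i in column block i-1, and zeros elsewhere: \<delta>_\<Omega> is block lower unitriangular,
  whence det \<delta>_\<Omega> = 1 whatever the source maps are. The restricted Laplacian is the Gram
  matrix \<delta>_\<Omega>^T \<delta>_\<Omega>, so it has determinant 1 and is positive definite.\<close>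

lemma submatrix_gram:
  "submatrix (transpose_mat A * A) I I = transpose_mat (submatrix A UNIV I) * submatrix A UNIV I"
  (is "_ = ?G")
proof (rule eq_matI)
  fix p q assume "p < dim_row ?G" and "q < dim_col ?G"
  then have p: "p < card {j. j < dim_col A \<and> j \<in> I}" and q: "q < card {j. j < dim_col A \<and> j \<in> I}"
    by (simp_all add: dim_submatrix)
  have "pick I p < dim_col A" "pick I q < dim_col A"
    using pick_le p q by (simp_all add: conj_commute)
  then have "submatrix (transpose_mat A * A) I I $$ (p, q) =
      (\<Sum>r<dim_row A. A $$ (r, pick I p) * A $$ (r, pick I q))"
    using p q by (simp add: submatrix_index scalar_prod_def atLeast0LessThan)
  also have "\<dots> = ?G $$ (p, q)"
    using p q by (simp add: scalar_prod_def atLeast0LessThan dim_submatrix submatrix_index pick_UNIV)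
  finally show "submatrix (transpose_mat A * A) I I $$ (p, q) = ?G $$ (p, q)" .
qed (simp_all add: dim_submatrix)

lemma gram_positive_definite:
  fixes B :: "real mat"
  assumes B: "B \<in> carrier_mat N N" and det: "det B \<noteq> 0"
  shows "positive_definite_mat (transpose_mat B * B)"
  unfolding positive_definite_mat_def
proof (intro conjI ballI impI)
  show "transpose_mat B * B \<in> carrier_mat (dim_row (transpose_mat B * B)) (dim_row (transpose_mat B * B))"
    using B by simp
  show "transpose_mat (transpose_mat B * B) = transpose_mat B * B"
    using B by (simp add: transpose_mult[of _ N N _ N])
  fix x :: "real vec" assume "x \<in> carrier_vec (dim_row (transpose_mat B * B))"
    and "x \<noteq> 0\<^sub>v (dim_row (transpose_mat B * B))"
  then have x: "x \<in> carrier_vec N" "x \<noteq> 0\<^sub>v N" using B by simp_all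
  have Bx: "B *\<^sub>v x \<in> carrier_vec N" "B *\<^sub>v x \<noteq> 0\<^sub>v N"
    using B x det det_0_iff_vec_prod_zero[OF B] by auto
  have "x \<bullet> ((transpose_mat B * B) *\<^sub>v x) = (B *\<^sub>v x) \<bullet> (B *\<^sub>v x)"
    using B x transpose_vec_mult_scalar[of "transpose_mat B" N N "B *\<^sub>v x" x]
    by (simp add: assoc_mult_mat_vec[of _ N N _ N] comm_scalar_prod[of x N])
  also have "\<dots> = (B *\<^sub>v x) \<bullet>c (B *\<^sub>v x)"
    by (simp add: conjugate_vec_def)
  also have "\<dots> > 0"
    using Bx conjugate_square_ge_0_vec[of "B *\<^sub>v x"] conjugate_square_eq_0_vec[OF Bx(1)]
    by (simp add: order_less_le)
  finally show "x \<bullet> ((transpose_mat B * B) *\<^sub>v x) > 0" .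
qed

definition block_offset :: "(nat \<Rightarrow> nat) \<Rightarrow> nat \<Rightarrow> nat" where
  "block_offset d i = (\<Sum>q<i. d q)"

lemma block_offset_0 [simp]: "block_offset d 0 = 0"
  by (simp add: block_offset_def)

lemma block_offset_Suc: "block_offset d (Suc i) = block_offset d i + d i"
  by (simp add: block_offset_def)

lemma block_offset_mono: "i \<le> j \<Longrightarrow> block_offset d i \<le> block_offset d j"
  unfolding block_offset_def by (rule sum_mono2) auto

lemma block_offset_add_le: "i < j \<Longrightarrow> block_offset d i + d i \<le> block_offset d j"
  using block_offset_mono[of "Suc i" j d] by (simp add: block_offset_Suc)

lemma block_offset_cases:
  assumes "a < block_offset d M"
  obtains j s where "j < M" "s < d j" "a = block_offset d j + s"
proof -
  have "\<exists>j<M. \<exists>s<d j. a = block_offset d j + s"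
    using assms
  proof (induction M)
    case (Suc M)
    show ?case
    proof (cases "a < block_offset d M")
      case True
      then show ?thesis using Suc.IH less_SucI by blast
    next
      case False
      then have "a - block_offset d M < d M" "a = block_offset d M + (a - block_offset d M)"
        using Suc.prems by (simp_all add: block_offset_Suc)
      then show ?thesis using lessI by blast
    qed
  qed simp
  then show thesis using that by blast
qed

lemma block_offset_unique:
  assumes s: "s < d i" "s' < d j" and eq: "block_offset d i + s = block_offset d j + s'"
  shows "i = j" "s = s'"
proof -
  have "\<not> i < j" "\<not> j < i"
    using block_offset_add_le[of i j d] block_offset_add_le[of j i d] s eq by linarith+
  then show "i = j" by simp
  then show "s = s'" using eq by simp
qed

lemma dim_path_coboundary:
  "dim_row (path_coboundary m dv de Fs Ft) = block_offset de m"
  "dim_col (path_coboundary m dv de Fs Ft) = block_offset dv (Suc m)"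
  by (simp_all add: path_coboundary_def block_offset_def)

lemma blk_index: "s < dim_row A \<Longrightarrow> t < dim_col A \<Longrightarrow> blk A r0 c0 (r0 + s, c0 + t) = A $$ (s, t)"
  by (simp add: blk_def)

lemma blk_outside_cols: "c < c0 \<or> c0 + dim_col A \<le> c \<Longrightarrow> blk A r0 c0 (r, c) = 0"
  by (auto simp: blk_def)

text \<open>For the network
  sheaf these are the free coordinates \<Omega>, and trailing_coords together with the input stalk
  are the fixed ones.\<close>

definition leading_coords :: "(nat \<Rightarrow> nat) \<Rightarrow> (nat \<Rightarrow> nat) \<Rightarrow> nat \<Rightarrow> nat set" where
  "leading_coords dv de i =
     (\<Union>j<i. {block_offset dv (Suc j) ..< block_offset dv (Suc j) + de j})"

definition trailing_coords :: "(nat \<Rightarrow> nat) \<Rightarrow> (nat \<Rightarrow> nat) \<Rightarrow> nat \<Rightarrow> nat set" where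
  "trailing_coords dv de i =
     (\<Union>j<i. {block_offset dv (Suc j) + de j ..< block_offset dv (Suc (Suc j))})"

lemma finite_leading_coords [simp]: "finite (leading_coords dv de i)"
  by (simp add: leading_coords_def)

lemma leading_coords_Suc:
  "leading_coords dv de (Suc i) =
     leading_coords dv de i \<union> {block_offset dv (Suc i) ..< block_offset dv (Suc i) + de i}"
  by (auto simp: leading_coords_def lessThan_Suc)

lemma leading_coords_mono: "i \<le> j \<Longrightarrow> leading_coords dv de i \<subseteq> leading_coords dv de j"
  unfolding leading_coords_def by (rule SUP_subset_mono) auto

lemma mem_leading_coords:
  "a \<in> leading_coords dv de i \<longleftrightarrow> (\<exists>j<i. \<exists>s<de j. a = block_offset dv (Suc j) + s)"
proof
  assume "a \<in> leading_coords dv de i"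
  then obtain j where "j < i" "block_offset dv (Suc j) \<le> a" "a < block_offset dv (Suc j) + de j"
    by (auto simp: leading_coords_def)
  then show "\<exists>j<i. \<exists>s<de j. a = block_offset dv (Suc j) + s"
    by (intro exI[of _ j] conjI exI[of _ "a - block_offset dv (Suc j)"]) auto
qed (force simp: leading_coords_def)

lemma mem_trailing_coords:
  "a \<in> trailing_coords dv de i \<longleftrightarrow>
     (\<exists>j<i. \<exists>s. de j \<le> s \<and> s < dv (Suc j) \<and> a = block_offset dv (Suc j) + s)"
proof
  assume "a \<in> trailing_coords dv de i"
  then obtain j where "j < i" "block_offset dv (Suc j) + de j \<le> a" "a < block_offset dv (Suc j) + dv (Suc j)"
    by (auto simp: trailing_coords_def block_offset_Suc[of dv "Suc _"])
  then show "\<exists>j<i. \<exists>s. de j \<le> s \<and> s < dv (Suc j) \<and> a = block_offset dv (Suc j) + s"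
    by (intro exI[of _ j] conjI exI[of _ "a - block_offset dv (Suc j)"]) auto
qed (force simp: trailing_coords_def block_offset_Suc[of dv "Suc _"])

locale path_sheaf_dims =
  fixes m :: nat and dv de :: "nat \<Rightarrow> nat"
  assumes edge_le_target: "\<And>i. i < m \<Longrightarrow> de i \<le> dv (Suc i)"
begin

lemma leading_coords_less:
  assumes "i \<le> m" "a \<in> leading_coords dv de i"
  shows "a < block_offset dv (Suc i)"
proof -
  obtain j s where j: "j < i" "s < de j" "a = block_offset dv (Suc j) + s"
    using assms(2) by (auto simp: mem_leading_coords)
  have "a < block_offset dv (Suc j) + dv (Suc j)"
    using j edge_le_target[of j] assms(1) by simp
  also have "\<dots> \<le> block_offset dv (Suc i)"
    using block_offset_add_le[of "Suc j" "Suc i" dv] j by simp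
  finally show ?thesis .
qed

lemma card_leading_coords: "i \<le> m \<Longrightarrow> card (leading_coords dv de i) = block_offset de i"
proof (induction i)
  case (Suc i)
  have "leading_coords dv de i \<inter> {block_offset dv (Suc i) ..< block_offset dv (Suc i) + de i} = {}"
    using leading_coords_less[of i] Suc.prems by fastforce
  then show ?case
    using Suc by (simp add: leading_coords_Suc card_Un_disjoint block_offset_Suc)
qed (simp add: leading_coords_def)

lemma leading_coords_below:
  assumes i: "i < m" and s: "s \<le> de i"
  shows "{a \<in> leading_coords dv de m. a < block_offset dv (Suc i) + s} =
    leading_coords dv de i \<union> {block_offset dv (Suc i) ..< block_offset dv (Suc i) + s}"
proof (intro equalityI subsetI)
  fix a assume "a \<in> {a \<in> leading_coords dv de m. a < block_offset dv (Suc i) + s}"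
  then obtain j t where j: "j < m" "t < de j" "a = block_offset dv (Suc j) + t"
    and a: "a < block_offset dv (Suc i) + s"
    by (auto simp: mem_leading_coords)
  have "\<not> i < j"
    using block_offset_add_le[of "Suc i" "Suc j" dv] edge_le_target[OF i] s j a by auto
  then consider "j < i" | "j = i" by linarith
  then show "a \<in> leading_coords dv de i \<union> {block_offset dv (Suc i) ..< block_offset dv (Suc i) + s}"
  proof cases
    case 1
    then have "a \<in> leading_coords dv de i" using j by (auto simp: mem_leading_coords)
    then show ?thesis by simp
  qed (use j a in simp)
next
  fix a assume "a \<in> leading_coords dv de i \<union> {block_offset dv (Suc i) ..< block_offset dv (Suc i) + s}"
  then show "a \<in> {a \<in> leading_coords dv de m. a < block_offset dv (Suc i) + s}"
  proof
    assume "a \<in> leading_coords dv de i"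
    then show ?thesis
      using leading_coords_less[of i a] leading_coords_mono[of i m dv de] i by auto
  next
    assume "a \<in> {block_offset dv (Suc i) ..< block_offset dv (Suc i) + s}"
    then have "a \<in> leading_coords dv de (Suc i)"
      using s by (auto simp: leading_coords_Suc)
    then show ?thesis
      using leading_coords_mono[of "Suc i" m dv de] i \<open>a \<in> {_ ..< _}\<close> by auto
  qed
qed

lemma pick_leading_coords:
  assumes i: "i < m" and s: "s < de i"
  shows "pick (leading_coords dv de m) (block_offset de i + s) = block_offset dv (Suc i) + s"
proof -
  have "block_offset dv (Suc i) + s \<in> leading_coords dv de m"
    using i s by (auto simp: mem_leading_coords)
  moreover have "leading_coords dv de i \<inter> {block_offset dv (Suc i) ..< block_offset dv (Suc i) + s} = {}"
    using leading_coords_less[of i] i by fastforce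
  then have "card {a \<in> leading_coords dv de m. a < block_offset dv (Suc i) + s} = block_offset de i + s"
    using i s by (simp add: leading_coords_below card_Un_disjoint card_leading_coords)
  ultimately show ?thesis
    using pick_card_in_set by metis
qed

lemma leading_coords_complement:
  "{..< block_offset dv (Suc m)} - ({..< dv 0} \<union> trailing_coords dv de m) = leading_coords dv de m"
proof (intro equalityI subsetI)
  fix a assume a: "a \<in> {..< block_offset dv (Suc m)} - ({..< dv 0} \<union> trailing_coords dv de m)"
  then obtain j s where j: "j < Suc m" "s < dv j" "a = block_offset dv j + s"
    using block_offset_cases[of a dv "Suc m"] by blast
  have "\<not> a < dv 0" using a by blast
  then have "j \<noteq> 0" using j by (intro notI) simp
  then obtain i where i: "j = Suc i" "i < m" using j(1) not0_implies_Suc by fastforce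
  have "\<not> de i \<le> s"
    using a i j by (auto simp: mem_trailing_coords)
  then show "a \<in> leading_coords dv de m"
    using i j by (auto simp: mem_leading_coords)
next
  fix a assume a: "a \<in> leading_coords dv de m"
  then obtain i s where i: "i < m" "s < de i" "a = block_offset dv (Suc i) + s"
    by (auto simp: mem_leading_coords)
  have "\<not> a < dv 0"
    using block_offset_mono[of 1 "Suc i" dv] i by (simp add: block_offset_Suc)
  moreover have "a \<notin> trailing_coords dv de m"
  proof
    assume "a \<in> trailing_coords dv de m"
    then obtain i' s' where "de i' \<le> s'" "s' < dv (Suc i')" "a = block_offset dv (Suc i') + s'"
      by (auto simp: mem_trailing_coords)
    then show False
      using block_offset_unique[of s dv "Suc i" s' "Suc i'"] i edge_le_target[of i] by auto
  qed
  ultimately show "a \<in> {..< block_offset dv (Suc m)} - ({..< dv 0} \<union> trailing_coords dv de m)"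
    using leading_coords_less[of m a] a by auto
qed

end

locale unit_target_path_sheaf = path_sheaf_dims +
  fixes Fs Ft :: "nat \<Rightarrow> real mat"
  assumes Fs_carrier: "\<And>i. i < m \<Longrightarrow> Fs i \<in> carrier_mat (de i) (dv i)"
    and Ft_carrier: "\<And>i. i < m \<Longrightarrow> Ft i \<in> carrier_mat (de i) (dv (Suc i))"
    and Ft_leading_identity:
      "\<And>i s s'. i < m \<Longrightarrow> s < de i \<Longrightarrow> s' < de i \<Longrightarrow> Ft i $$ (s, s') = (if s = s' then 1 else 0)"
begin

abbreviation free_coboundary :: "real mat" where
  "free_coboundary \<equiv> submatrix (path_coboundary m dv de Fs Ft) UNIV (leading_coords dv de m)"

lemma path_coboundary_index:
  assumes i: "i < m" "s < de i" and c: "c < block_offset dv (Suc m)"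
  shows "path_coboundary m dv de Fs Ft $$ (block_offset de i + s, c) =
     blk (Ft i) (block_offset de i) (block_offset dv (Suc i)) (block_offset de i + s, c)
     - blk (Fs i) (block_offset de i) (block_offset dv i) (block_offset de i + s, c)"
proof -
  let ?f = "\<lambda>j. blk (Ft j) (block_offset de j) (block_offset dv (Suc j)) (block_offset de i + s, c)
     - blk (Fs j) (block_offset de j) (block_offset dv j) (block_offset de i + s, c)"
  have other_rows: "?f j = 0" if j: "j \<in> {..<m} - {i}" for j
  proof -
    have "\<not> (block_offset de j \<le> block_offset de i + s \<and> block_offset de i + s < block_offset de j + de j)"
      using block_offset_unique[of "block_offset de i + s - block_offset de j" de j s i] i j by auto
    then show ?thesis using Ft_carrier[of j] Fs_carrier[of j] j by (auto simp: blk_def)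
  qed
  have "block_offset de i + s < block_offset de m"
    using block_offset_add_le[OF i(1), of de] i(2) by linarith
  then have "path_coboundary m dv de Fs Ft $$ (block_offset de i + s, c) = (\<Sum>j<m. ?f j)"
    using c unfolding path_coboundary_def block_offset_def[symmetric] by simp
  also have "\<dots> = ?f i"
    using i other_rows by (simp add: sum.remove[of _ i])
  finally show ?thesis .
qed

lemma free_coboundary_carrier: "free_coboundary \<in> carrier_mat (block_offset de m) (block_offset de m)"
proof
  show "dim_row free_coboundary = block_offset de m"
    by (simp add: dim_submatrix dim_path_coboundary)
  have "{j. j < block_offset dv (Suc m) \<and> j \<in> leading_coords dv de m} = leading_coords dv de m"
    using leading_coords_less[OF order_refl] by blast
  then show "dim_col free_coboundary = block_offset de m"
    by (simp only: dim_submatrix dim_path_coboundary card_leading_coords[OF order_refl])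
qed

lemma free_coboundary_block_index:
  assumes i: "i \<le> i'" "i' < m" and s: "s < de i" "s' < de i'"
  shows "free_coboundary $$ (block_offset de i + s, block_offset de i' + s') =
    (if i = i' \<and> s = s' then 1 else 0)"
proof -
  let ?c = "block_offset dv (Suc i') + s'"
  have row: "block_offset de i + s < block_offset de m"
    using block_offset_add_le[of i m de] i s by simp
  have col: "block_offset de i' + s' < block_offset de m"
    using block_offset_add_le[of i' m de] i s by simp
  have c: "?c < block_offset dv (Suc m)"
    using leading_coords_less[of m ?c] i s by (auto simp: mem_leading_coords)
  have "free_coboundary $$ (block_offset de i + s, block_offset de i' + s') =
      path_coboundary m dv de Fs Ft $$ (block_offset de i + s, ?c)"
    using free_coboundary_carrier row col i s
    by (subst submatrix_index) (auto simp: dim_submatrix pick_UNIV pick_leading_coords)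
  also have "\<dots> = blk (Ft i) (block_offset de i) (block_offset dv (Suc i)) (block_offset de i + s, ?c)
     - blk (Fs i) (block_offset de i) (block_offset dv i) (block_offset de i + s, ?c)"
    using i s c by (intro path_coboundary_index) auto
  finally have entry: "free_coboundary $$ (block_offset de i + s, block_offset de i' + s') =
     blk (Ft i) (block_offset de i) (block_offset dv (Suc i)) (block_offset de i + s, ?c)
     - blk (Fs i) (block_offset de i) (block_offset dv i) (block_offset de i + s, ?c)" .
  have source: "blk (Fs i) (block_offset de i) (block_offset dv i) (block_offset de i + s, ?c) = 0"
    using Fs_carrier[of i] block_offset_mono[of "Suc i" "Suc i'" dv] i
    by (intro blk_outside_cols) (simp add: block_offset_Suc[of dv i])
  have target: "blk (Ft i) (block_offset de i) (block_offset dv (Suc i)) (block_offset de i + s, ?c) =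
      (if i = i' \<and> s = s' then 1 else 0)"
  proof (cases "i = i'")
    case True
    then show ?thesis
      using Ft_carrier[of i] Ft_leading_identity[of i s s'] edge_le_target[of i] i s
      by (simp add: blk_index)
  next
    case False
    then have "block_offset dv (Suc i) + dv (Suc i) \<le> block_offset dv (Suc i')"
      using block_offset_add_le[of "Suc i" "Suc i'" dv] i by simp
    then have "blk (Ft i) (block_offset de i) (block_offset dv (Suc i)) (block_offset de i + s, ?c) = 0"
      using Ft_carrier[of i] i by (intro blk_outside_cols disjI2) simp
    then show ?thesis using False by simp
  qed
  show ?thesis
    unfolding entry source target by simp
qed

lemma free_coboundary_lower_unitriangular:
  assumes pq: "p \<le> q" "q < block_offset de m"
  shows "free_coboundary $$ (p, q) = (if p = q then 1 else 0)"
proof -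
  have p: "p < block_offset de m" using pq by simp
  obtain i s where i: "i < m" "s < de i" "p = block_offset de i + s"
    using block_offset_cases[OF p] .
  obtain i' s' where i': "i' < m" "s' < de i'" "q = block_offset de i' + s'"
    using block_offset_cases[OF pq(2)] .
  have "i \<le> i'"
  proof (rule ccontr)
    assume "\<not> i \<le> i'"
    then have "block_offset de i' + de i' \<le> block_offset de i"
      by (intro block_offset_add_le) simp
    then show False using i i' pq by linarith
  qed
  then have "free_coboundary $$ (p, q) = (if i = i' \<and> s = s' then 1 else 0)"
    using free_coboundary_block_index i i' by simp
  moreover have "i = i' \<and> s = s' \<longleftrightarrow> p = q"
    using block_offset_unique[of s de i s' i'] i i' by auto
  ultimately show ?thesis by simp
qed

lemma det_free_coboundary: "det free_coboundary = 1"
proof -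
  have "det free_coboundary = prod_list (diag_mat free_coboundary)"
    using free_coboundary_lower_unitriangular
    by (intro det_lower_triangular[OF _ free_coboundary_carrier]) simp
  also have "\<dots> = 1"
    unfolding prod_list_diag_prod
    using free_coboundary_carrier free_coboundary_lower_unitriangular by (intro prod.neutral) auto
  finally show ?thesis .
qed

end

lemma ext_weight_carrier:
  assumes "W \<in> carrier_mat r c" "b \<in> carrier_vec r"
  shows "ext_weight W b \<in> carrier_mat r (c + r)"
proof -
  have "ext_weight W b \<in> carrier_mat (r + 0) (c + r)"
    unfolding ext_weight_def using assms by (intro four_block_carrier_mat) auto
  then show ?thesis by simp
qed

lemma nn_edge_cases:
  fixes i k :: nat
  assumes "i < 2 * k + 2"
  obtains (weight_edge) t where "i = 2 * t" "t \<le> k"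
    | (activation_edge) t where "i = 2 * t + 1" "t < k"
    | (output_edge) "i = 2 * k + 1"
proof -
  obtain t where "i = 2 * t \<or> i = 2 * t + 1" by (metis oddE evenE)
  then show thesis using assms that by (cases "i = 2 * k + 1") auto
qed

lemma nn_path_sheaf_dims: "path_sheaf_dims (2 * k + 2) (nn_vdim k n) (nn_edim k n)"
proof
  fix i assume "i < 2 * k + 2"
  then show "nn_edim k n i \<le> nn_vdim k n (Suc i)"
    by (cases rule: nn_edge_cases) (auto simp: nn_edim_def nn_vdim_def)
qed

lemma nn_unit_target_path_sheaf:
  assumes W: "\<And>l. 1 \<le> l \<Longrightarrow> l \<le> k + 1 \<Longrightarrow> W l \<in> carrier_mat (n l) (n (l - 1))"
    and b: "\<And>l. 1 \<le> l \<Longrightarrow> l \<le> k + 1 \<Longrightarrow> b l \<in> carrier_vec (n l)"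
    and R: "\<And>l. 1 \<le> l \<Longrightarrow> l \<le> k \<Longrightarrow> R l \<in> carrier_mat (n l) (n l)"
    and \<phi>: "\<phi> \<in> carrier_mat (n (k + 1)) (n (k + 1))"
  shows "unit_target_path_sheaf (2 * k + 2) (nn_vdim k n) (nn_edim k n) (nn_src k W b R \<phi>) (nn_tgt k n)"
proof (intro unit_target_path_sheaf.intro nn_path_sheaf_dims unit_target_path_sheaf_axioms.intro)
  fix i assume "i < 2 * k + 2"
  then show "nn_src k W b R \<phi> i \<in> carrier_mat (nn_edim k n i) (nn_vdim k n i)"
  proof (cases rule: nn_edge_cases)
    case (weight_edge t)
    then show ?thesis
      using ext_weight_carrier[OF W[of "t + 1"] b[of "t + 1"]]
      by (auto simp: nn_src_def nn_edim_def nn_vdim_def)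
  next
    case (activation_edge t)
    then show ?thesis
      using R[of "t + 1"] by (auto simp: nn_src_def nn_edim_def nn_vdim_def)
  qed (use \<phi> in \<open>auto simp: nn_src_def nn_edim_def nn_vdim_def\<close>)
next
  fix i assume "i < 2 * k + 2"
  then show "nn_tgt k n i \<in> carrier_mat (nn_edim k n i) (nn_vdim k n (Suc i))"
    by (cases rule: nn_edge_cases) (auto simp: nn_tgt_def nn_edim_def nn_vdim_def proj_mat_def)
next
  fix i s s' assume "i < 2 * k + 2" "s < nn_edim k n i" "s' < nn_edim k n i"
  then show "nn_tgt k n i $$ (s, s') = (if s = s' then 1 else 0)"
    by (cases rule: nn_edge_cases) (auto simp: nn_tgt_def nn_edim_def proj_mat_def)
qed

lemma nn_voff_eq_block_offset: "nn_voff k n = block_offset (nn_vdim k n)"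
  by (simp add: fun_eq_iff nn_voff_def block_offset_def)

lemma nn_fixed_eq:
  "nn_fixed k n = {..< nn_vdim k n 0} \<union> trailing_coords (nn_vdim k n) (nn_edim k n) (2 * k + 2)"
proof -
  let ?bo = "block_offset (nn_vdim k n)"
  have "(\<Union>l\<in>{1..k}. {?bo (2 * l) + n l ..< ?bo (2 * l) + n l + n (l + 1)}) =
      trailing_coords (nn_vdim k n) (nn_edim k n) (2 * k + 2)"
  proof (intro equalityI subsetI)
    fix a assume "a \<in> (\<Union>l\<in>{1..k}. {?bo (2 * l) + n l ..< ?bo (2 * l) + n l + n (l + 1)})"
    then obtain l where l: "1 \<le> l" "l \<le> k" "?bo (2 * l) + n l \<le> a" "a < ?bo (2 * l) + n l + n (l + 1)"
      by auto
    then obtain t where t: "l = Suc t" "t < k"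
      by (cases l) auto
    show "a \<in> trailing_coords (nn_vdim k n) (nn_edim k n) (2 * k + 2)"
      unfolding mem_trailing_coords using l t
      by (intro exI[of _ "2 * t + 1"] conjI exI[of _ "a - ?bo (2 * l)"]) (auto simp: nn_edim_def nn_vdim_def)
  next
    fix a assume "a \<in> trailing_coords (nn_vdim k n) (nn_edim k n) (2 * k + 2)"
    then obtain j s where j: "j < 2 * k + 2" "nn_edim k n j \<le> s" "s < nn_vdim k n (Suc j)"
      and a: "a = ?bo (Suc j) + s"
      by (auto simp: mem_trailing_coords)
    from j(1) show "a \<in> (\<Union>l\<in>{1..k}. {?bo (2 * l) + n l ..< ?bo (2 * l) + n l + n (l + 1)})"
    proof (cases rule: nn_edge_cases)
      case (activation_edge t)
      then show ?thesis
        using j a by (intro UN_I[of "t + 1"]) (auto simp: nn_edim_def nn_vdim_def)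
    qed (use j in \<open>auto simp: nn_edim_def nn_vdim_def\<close>)
  qed
  then show ?thesis
    by (simp add: nn_fixed_def nn_voff_eq_block_offset)
qed

lemma nn_free_eq: "nn_free k n = leading_coords (nn_vdim k n) (nn_edim k n) (2 * k + 2)"
proof -
  interpret path_sheaf_dims "2 * k + 2" "nn_vdim k n" "nn_edim k n"
    by (rule nn_path_sheaf_dims)
  have last_vertex: "2 * k + 3 = Suc (2 * k + 2)" by simp
  show ?thesis
    unfolding nn_free_def nn_fixed_eq nn_voff_eq_block_offset last_vertex
    by (rule leading_coords_complement)
qed

theorem lemma3p2:
  fixes k :: nat and n :: "nat \<Rightarrow> nat"
    and W :: "nat \<Rightarrow> real mat" and b :: "nat \<Rightarrow> real vec" and R :: "nat \<Rightarrow> real mat"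
  assumes W: "\<And>l. 1 \<le> l \<Longrightarrow> l \<le> k + 1 \<Longrightarrow> W l \<in> carrier_mat (n l) (n (l - 1))"
    and b: "\<And>l. 1 \<le> l \<Longrightarrow> l \<le> k + 1 \<Longrightarrow> b l \<in> carrier_vec (n l)"
    and R_dim: "\<And>l. 1 \<le> l \<Longrightarrow> l \<le> k \<Longrightarrow> R l \<in> carrier_mat (n l) (n l)"
    and R_diag: "\<And>l i j. 1 \<le> l \<Longrightarrow> l \<le> k \<Longrightarrow> i < n l \<Longrightarrow> j < n l \<Longrightarrow> i \<noteq> j \<Longrightarrow> R l $$ (i, j) = 0"
    and R_01: "\<And>l i. 1 \<le> l \<Longrightarrow> l \<le> k \<Longrightarrow> i < n l \<Longrightarrow> R l $$ (i, i) = 0 \<or> R l $$ (i, i) = 1"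
  shows
    "let \<delta> = nn_coboundary k n W b R (1\<^sub>m (n (k + 1)));
         \<Omega> = nn_free k n;
         \<delta>\<Omega> = submatrix \<delta> UNIV \<Omega>;
         L\<Omega> = submatrix (sheaf_laplacian \<delta>) \<Omega> \<Omega>
     in dim_row \<delta>\<Omega> = dim_col \<delta>\<Omega> \<and> det \<delta>\<Omega> = 1 \<and>
        L\<Omega> = transpose_mat \<delta>\<Omega> * \<delta>\<Omega> \<and> det L\<Omega> = 1 \<and> positive_definite_mat L\<Omega>"
proof -
  interpret unit_target_path_sheaf "2 * k + 2" "nn_vdim k n" "nn_edim k n"
      "nn_src k W b R (1\<^sub>m (n (k + 1)))" "nn_tgt k n"
    by (rule nn_unit_target_path_sheaf[where k = k and n = n, OF W b R_dim one_carrier_mat])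
  define \<delta> where "\<delta> = nn_coboundary k n W b R (1\<^sub>m (n (k + 1)))"
  define N where "N = block_offset (nn_edim k n) (2 * k + 2)"
  have \<delta>\<Omega>: "submatrix \<delta> UNIV (nn_free k n) = free_coboundary"
    by (simp add: \<delta>_def nn_coboundary_def nn_free_eq)
  have carrier: "free_coboundary \<in> carrier_mat N N"
    unfolding N_def by (rule free_coboundary_carrier)
  have det_gram: "det (transpose_mat free_coboundary * free_coboundary) = 1"
    using carrier det_free_coboundary by (simp add: det_mult[of _ N] det_transpose)
  show ?thesis
    unfolding Let_def \<delta>_def[symmetric] sheaf_laplacian_def submatrix_gram \<delta>\<Omega>
    using carrier det_free_coboundary det_gram gram_positive_definite[OF carrier] by simp
qed

end
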